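(* Let $\mathbb{K}$ be an infinite field and $P=[f_1,\ldots,f_n]$ a generic sequence of homogeneous polynomials in $\mathbb{K}[x_1,\ldots,x_n]$ with $\deg f_i=d_i$. If the Moreno-Socías conjecture holds, then for any term $\mathbf{u}\notin\mathrm{lt}(\langle P\rangle)$, the term $x_1\mathbf{u}$ either is not in $\mathrm{lt}(\langle P\rangle)$ or is a minimal generator of $\mathrm{lt}(\langle P\rangle)$.
   Context: DRL is the degree reverse lexicographic ordering with $x_1<\cdots<x_n$, and $\mathrm{lt}(\langle P\rangle)$ is the leading term ideal w.r.t. DRL. A property holds for a generic sequence if it holds on a nonempty Zariski-open subset of the coefficient space. A monomial ideal $J$ is weakly reverse lexicographic if, for each minimal generator $\mathbf{t}$, every term of the same total degree greater than $\mathbf{t}$ w.r.t. DRL lies in $J$. Moreno-Socías conjecture: for every infinite field and every generic sequence of $n$ polynomials in $n$ variables, the DRL leading term ideal of the ideal it generates is weakly reverse lexicographic. *)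

theory Defs
  imports Main "HOL-Library.Poly_Mapping"
begin

text \<open>Terms (monomials) in variables x_1,...,x_n are exponent vectors
  nat =>0 nat; variable x_(i+1) is represented by index i, so x_1 is index 0.
  Polynomials are finitely supported maps from terms to coefficients.\<close>

type_synonym term_ = "nat \<Rightarrow>\<^sub>0 nat"
type_synonym 'a mpoly_ = "term_ \<Rightarrow>\<^sub>0 'a"

definition tdeg :: "term_ \<Rightarrow> nat" where
  "tdeg t = (\<Sum>i\<in>Poly_Mapping.keys t. Poly_Mapping.lookup t i)"

definition is_term :: "nat \<Rightarrow> term_ \<Rightarrow> bool" where
  "is_term n t \<longleftrightarrow> Poly_Mapping.keys t \<subseteq> {..<n}"

definition in_vars :: "nat \<Rightarrow> 'a::zero mpoly_ \<Rightarrow> bool" where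
  "in_vars n p \<longleftrightarrow> (\<forall>t\<in>Poly_Mapping.keys p. is_term n t)"

definition homogeneous_of :: "nat \<Rightarrow> nat \<Rightarrow> 'a::zero mpoly_ \<Rightarrow> bool" where
  "homogeneous_of n k p \<longleftrightarrow> in_vars n p \<and> (\<forall>t\<in>Poly_Mapping.keys p. tdeg t = k)"

text \<open>DRL with x_1 < ... < x_n: s <_DRL t iff deg s < deg t, or the degrees are
  equal and at the smallest variable index i where s and t differ, t has the
  smaller exponent.\<close>
definition drl_less :: "term_ \<Rightarrow> term_ \<Rightarrow> bool" where
  "drl_less s t \<longleftrightarrow> tdeg s < tdeg t \<or>
     (tdeg s = tdeg t \<and> (\<exists>i. Poly_Mapping.lookup t i < Poly_Mapping.lookup s i \<and> (\<forall>j<i. Poly_Mapping.lookup s j = Poly_Mapping.lookup t j)))"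

definition lterm :: "'a::zero mpoly_ \<Rightarrow> term_" where
  "lterm p = (THE t. t \<in> Poly_Mapping.keys p \<and> (\<forall>s\<in>Poly_Mapping.keys p. s \<noteq> t \<longrightarrow> drl_less s t))"

definition tdvd :: "term_ \<Rightarrow> term_ \<Rightarrow> bool" where
  "tdvd s t \<longleftrightarrow> (\<forall>i. Poly_Mapping.lookup s i \<le> Poly_Mapping.lookup t i)"

definition ideal_gen :: "nat \<Rightarrow> (nat \<Rightarrow> 'a::comm_ring_1 mpoly_) \<Rightarrow> 'a mpoly_ set" where
  "ideal_gen n P = {\<Sum>i<n. q i * P i | q. \<forall>i<n. in_vars n (q i)}"

definition lt_ideal :: "nat \<Rightarrow> (nat \<Rightarrow> 'a::comm_ring_1 mpoly_) \<Rightarrow> term_ set" where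
  "lt_ideal n P = {t. is_term n t \<and> (\<exists>p\<in>ideal_gen n P. p \<noteq> 0 \<and> tdvd (lterm p) t)}"

definition min_gen :: "term_ set \<Rightarrow> term_ \<Rightarrow> bool" where
  "min_gen J t \<longleftrightarrow> t \<in> J \<and> (\<forall>s. tdvd s t \<and> s \<noteq> t \<longrightarrow> s \<notin> J)"

definition weakly_revlex :: "nat \<Rightarrow> term_ set \<Rightarrow> bool" where
  "weakly_revlex n J \<longleftrightarrow> (\<forall>t. min_gen J t \<longrightarrow>
      (\<forall>s. is_term n s \<and> tdeg s = tdeg t \<and> drl_less t s \<longrightarrow> s \<in> J))"

text \<open>Coefficient space of sequences [f_1..f_n] of homogeneous polynomials with
  deg f_i = d_i (index i-1); entries beyond n are normalised to 0. Its coordinates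
  are the coefficients Poly_Mapping.lookup (P i) t.\<close>
definition coeff_space :: "nat \<Rightarrow> (nat \<Rightarrow> nat) \<Rightarrow> (nat \<Rightarrow> 'a::zero mpoly_) set" where
  "coeff_space n d = {P. (\<forall>i<n. homogeneous_of n (d i) (P i)) \<and> (\<forall>i\<ge>n. P i = 0)}"

definition peval :: "(('v \<Rightarrow>\<^sub>0 nat) \<Rightarrow>\<^sub>0 'a::comm_ring_1) \<Rightarrow> ('v \<Rightarrow> 'a) \<Rightarrow> 'a" where
  "peval g x = (\<Sum>m\<in>Poly_Mapping.keys g. Poly_Mapping.lookup g m * (\<Prod>v\<in>Poly_Mapping.keys m. x v ^ Poly_Mapping.lookup m v))"

definition zariski_open :: "nat \<Rightarrow> (nat \<Rightarrow> nat) \<Rightarrow> (nat \<Rightarrow> 'a::comm_ring_1 mpoly_) set \<Rightarrow> bool" where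
  "zariski_open n d U \<longleftrightarrow> (\<exists>S :: (((nat \<times> term_) \<Rightarrow>\<^sub>0 nat) \<Rightarrow>\<^sub>0 'a) set.
      U = {P\<in>coeff_space n d. \<exists>g\<in>S. peval g (\<lambda>(i,t). Poly_Mapping.lookup (P i) t) \<noteq> 0})"

definition generic :: "nat \<Rightarrow> (nat \<Rightarrow> nat) \<Rightarrow> ((nat \<Rightarrow> 'a::comm_ring_1 mpoly_) \<Rightarrow> bool) \<Rightarrow> bool" where
  "generic n d Q \<longleftrightarrow> (\<exists>U. zariski_open n d U \<and> U \<noteq> {} \<and> (\<forall>P\<in>U. Q P))"

definition moreno_socias :: "'a::field itself \<Rightarrow> bool" where
  "moreno_socias _ \<longleftrightarrow> (\<forall>n d. generic n d (\<lambda>P :: nat \<Rightarrow> 'a mpoly_. weakly_revlex n (lt_ideal n P)))"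

end

theory Submission
  imports Defs
begin

text \<open>Suppose \<open>u \<notin> J = lt(\<langle>P\<rangle>)\<close> and \<open>x\<^sub>1 u \<in> J\<close> is not a minimal generator; then some
  minimal generator \<open>t\<close> of \<open>J\<close> divides \<open>x\<^sub>1 u\<close> properly.
  Since \<open>t\<close> does not divide \<open>u\<close>, it uses one more \<open>x\<^sub>1\<close> than \<open>u\<close>, and since \<open>t \<noteq> x\<^sub>1 u\<close>
  some other variable \<open>x\<^sub>j\<close> occurs in \<open>t\<close> less often than in \<open>u\<close>. Exchanging one \<open>x\<^sub>1\<close> of \<open>t\<close>
  for \<open>x\<^sub>j\<close> gives a term of the same degree that is DRL-larger than \<open>t\<close> (as \<open>x\<^sub>1\<close> is the
  smallest variable) and divides \<open>u\<close>. If \<open>J\<close> is weakly reverse lexicographic, as the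
  Moreno-Socias conjecture asserts for generic \<open>P\<close>, that term lies in \<open>J\<close>, and so does \<open>u\<close>.\<close>

lemma tdeg_eq_sum: "finite S \<Longrightarrow> Poly_Mapping.keys t \<subseteq> S \<Longrightarrow> tdeg t = (\<Sum>i\<in>S. Poly_Mapping.lookup t i)"
  unfolding tdeg_def by (rule sum.mono_neutral_left) (auto simp: in_keys_iff)

lemma tdeg_add: "tdeg (s + t) = tdeg s + tdeg t"
proof -
  let ?S = "Poly_Mapping.keys s \<union> Poly_Mapping.keys t"
  have "Poly_Mapping.keys (s + t) \<subseteq> ?S"
    by (auto simp: in_keys_iff lookup_add)
  then show ?thesis
    using tdeg_eq_sum[of ?S] by (simp add: lookup_add sum.distrib)
qed

lemma tdeg_single [simp]: "tdeg (Poly_Mapping.single i k) = k"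
  unfolding tdeg_def by simp

lemma tdeg_less_if_tdvd: "tdvd s t \<Longrightarrow> s \<noteq> t \<Longrightarrow> tdeg s < tdeg t"
proof -
  assume st: "tdvd s t" and "s \<noteq> t"
  then obtain i where "Poly_Mapping.lookup s i \<noteq> Poly_Mapping.lookup t i"
    by (meson poly_mapping_eqI)
  with st have i: "Poly_Mapping.lookup s i < Poly_Mapping.lookup t i"
    unfolding tdvd_def by (meson le_neq_implies_less)
  have keys: "Poly_Mapping.keys s \<subseteq> Poly_Mapping.keys t"
    using st unfolding tdvd_def by (metis in_keys_iff le_zero_eq subsetI)
  have "(\<Sum>k\<in>Poly_Mapping.keys t. Poly_Mapping.lookup s k) < (\<Sum>k\<in>Poly_Mapping.keys t. Poly_Mapping.lookup t k)"
    by (rule sum_strict_mono_ex1) (use st i in \<open>auto simp: tdvd_def in_keys_iff\<close>)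
  then show ?thesis
    using tdeg_eq_sum[OF finite_keys keys] by (simp add: tdeg_def)
qed

lemma tdvd_trans: "tdvd a b \<Longrightarrow> tdvd b c \<Longrightarrow> tdvd a c"
  unfolding tdvd_def using le_trans by blast

lemma tdvd_antisym: "tdvd a b \<Longrightarrow> tdvd b a \<Longrightarrow> a = b"
  unfolding tdvd_def by (meson antisym poly_mapping_eqI)

lemma is_term_tdvd: "tdvd s t \<Longrightarrow> is_term n t \<Longrightarrow> is_term n s"
  unfolding is_term_def tdvd_def by (metis in_keys_iff le_zero_eq subset_iff)

lemma ex_min_gen_tdvd:
  assumes "s \<in> J"
  obtains t where "min_gen J t" "tdvd t s"
proof -
  let ?D = "{t \<in> J. tdvd t s}"
  have "s \<in> ?D" using assms by (simp add: tdvd_def)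
  then obtain t where tD: "t \<in> ?D" and least: "\<And>r. r \<in> ?D \<Longrightarrow> tdeg t \<le> tdeg r"
    using ex_has_least_nat[of "\<lambda>t. t \<in> ?D" s tdeg] by blast
  have "min_gen J t"
    unfolding min_gen_def
    using tD least tdeg_less_if_tdvd tdvd_trans by (fastforce simp: not_le[symmetric])
  with tD that show ?thesis by blast
qed

definition monomial_ideal :: "nat \<Rightarrow> term_ set \<Rightarrow> bool" where
  "monomial_ideal n J \<longleftrightarrow> (\<forall>s t. s \<in> J \<and> tdvd s t \<and> is_term n t \<longrightarrow> t \<in> J)"

lemma monomial_ideal_lt_ideal: "monomial_ideal n (lt_ideal n P)"
  unfolding monomial_ideal_def lt_ideal_def using tdvd_trans by blast

lemma drl_less_exchange_single_0:
  assumes "Poly_Mapping.lookup t 0 \<noteq> 0" and "j \<noteq> 0"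
  defines "t' \<equiv> t - Poly_Mapping.single 0 1 + Poly_Mapping.single j 1"
  shows "tdeg t' = tdeg t" and "drl_less t t'"
proof -
  have "t - Poly_Mapping.single 0 1 + Poly_Mapping.single 0 1 = t"
    using assms(1) by (intro poly_mapping_eqI) (simp add: lookup_add lookup_minus lookup_single when_def)
  then have "tdeg (t - Poly_Mapping.single 0 1) + 1 = tdeg t"
    by (metis tdeg_add tdeg_single)
  then show deg: "tdeg t' = tdeg t"
    unfolding t'_def by (simp add: tdeg_add)
  have "Poly_Mapping.lookup t' 0 < Poly_Mapping.lookup t 0"
    using assms by (simp add: lookup_add lookup_minus lookup_single when_def)
  with deg show "drl_less t t'"
    unfolding drl_less_def by auto
qed

lemma exchange_divisor_add_single_0:
  assumes tw: "tdvd t (u + Poly_Mapping.single 0 1)" and tu: "\<not> tdvd t u"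
    and ne: "t \<noteq> u + Poly_Mapping.single 0 1"
  obtains j where "j \<noteq> 0" "Poly_Mapping.lookup t 0 \<noteq> 0"
    "tdvd (t - Poly_Mapping.single 0 1 + Poly_Mapping.single j 1) u"
proof -
  have le: "Poly_Mapping.lookup t k \<le> Poly_Mapping.lookup u k + (if k = 0 then 1 else 0)" for k
    using tw unfolding tdvd_def by (auto simp: lookup_add lookup_single when_def dest: spec[of _ k])
  obtain i where i: "Poly_Mapping.lookup u i < Poly_Mapping.lookup t i"
    using tu unfolding tdvd_def by (meson not_le)
  have t0: "Poly_Mapping.lookup t 0 = Poly_Mapping.lookup u 0 + 1"
    using i le[of i] le[of 0] by (cases "i = 0") auto
  obtain j where "Poly_Mapping.lookup t j \<noteq> Poly_Mapping.lookup (u + Poly_Mapping.single 0 1) j"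
    using ne by (meson poly_mapping_eqI)
  then have j: "j \<noteq> 0" "Poly_Mapping.lookup t j < Poly_Mapping.lookup u j"
    using t0 le[of j] by (auto simp: lookup_add lookup_single when_def split: if_splits)
  have "tdvd (t - Poly_Mapping.single 0 1 + Poly_Mapping.single j 1) u"
    unfolding tdvd_def
  proof
    fix k
    show "Poly_Mapping.lookup (t - Poly_Mapping.single 0 1 + Poly_Mapping.single j 1) k \<le> Poly_Mapping.lookup u k"
      using le[of k] t0 j by (auto simp: lookup_add lookup_minus lookup_single when_def)
  qed
  with j t0 that show ?thesis by simp
qed

lemma weakly_revlex_add_single_0:
  assumes J: "monomial_ideal n J" and wr: "weakly_revlex n J"
    and u: "is_term n u" "u \<notin> J"
  shows "u + Poly_Mapping.single 0 1 \<notin> J \<or> min_gen J (u + Poly_Mapping.single 0 1)"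
proof (rule ccontr)
  let ?w = "u + Poly_Mapping.single 0 1"
  assume "\<not> ?thesis"
  then obtain s where s: "s \<in> J" "tdvd s ?w" "s \<noteq> ?w"
    unfolding min_gen_def by blast
  obtain t where t: "min_gen J t" "tdvd t s"
    using ex_min_gen_tdvd[OF s(1)] by blast
  have tw: "tdvd t ?w" and "t \<noteq> ?w"
    using t(2) s(2,3) tdvd_trans tdvd_antisym by blast+
  moreover have "\<not> tdvd t u"
    using J t(1) u unfolding monomial_ideal_def min_gen_def by blast
  ultimately obtain j where j: "j \<noteq> 0" "Poly_Mapping.lookup t 0 \<noteq> 0"
    and t'u: "tdvd (t - Poly_Mapping.single 0 1 + Poly_Mapping.single j 1) u"
    using exchange_divisor_add_single_0 by blast
  have "t - Poly_Mapping.single 0 1 + Poly_Mapping.single j 1 \<in> J"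
    using wr t(1) drl_less_exchange_single_0[OF j(2,1)] is_term_tdvd[OF t'u u(1)]
    unfolding weakly_revlex_def by blast
  then show False
    using J t'u u unfolding monomial_ideal_def by blast
qed

theorem proposition6p6:
  fixes n :: nat and d :: "nat \<Rightarrow> nat"
  assumes "infinite (UNIV :: 'a::field set)"
    and "moreno_socias TYPE('a)"
    and "n \<ge> 1"
  shows "generic n d (\<lambda>P :: nat \<Rightarrow> 'a mpoly_.
           \<forall>u. is_term n u \<and> u \<notin> lt_ideal n P \<longrightarrow>
             (u + Poly_Mapping.single 0 1 \<notin> lt_ideal n P \<or>
              min_gen (lt_ideal n P) (u + Poly_Mapping.single 0 1)))"
proof -
  \<comment> \<open>The field being infinite and \<open>n \<ge> 1\<close> only matter for the conjecture itself, not here.\<close>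
  obtain U where "zariski_open n d U" "U \<noteq> {}"
    and "\<forall>P\<in>U. weakly_revlex n (lt_ideal n (P :: nat \<Rightarrow> 'a mpoly_))"
    using assms(2) unfolding moreno_socias_def generic_def by blast
  then show ?thesis
    unfolding generic_def
    using weakly_revlex_add_single_0[OF monomial_ideal_lt_ideal] by blast
qed

end
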